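(* Let $q$ be a prime power, $m>4$, $V=\mathbb F_q^m$ with a fixed ordered basis, and $\mu=m-1$. There exists a $(\mu+1)$-dimensional subspace of $\bigwedge^2V$ containing exactly $(q^{\mu}-1)+q^2(q-1)$ decomposable vectors, and the remaining $(q^{\mu}-q^2)(q-1)$ nonzero elements of this subspace are of rank $4$.
   Context: A nonzero $\omega\in\bigwedge^2V$ is decomposable if $\omega=u\wedge v$ for some $u,v\in V$. With respect to the fixed basis $e_1,\dots,e_m$, let $\sigma:\bigwedge^2V\to\{m\times m\text{ skew-symmetric matrices}\}$ be the linear isomorphism with $\sigma(e_r\wedge e_s)=\mathbf e_r\mathbf e_s^t-\mathbf e_s\mathbf e_r^t$ ($r<s$, $\mathbf e_i$ standard column vectors); the rank of $\omega\in\bigwedge^2V$ is the rank of the matrix $\sigma(\omega)$. *)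

theory Defs
  imports "HOL-Analysis.Analysis"
begin

text \<open>V = F^m is modelled as 'a^'n with CARD('n) = m; the fixed ordered basis e_1..e_m
  is indexed by the linearly ordered finite type 'n.  The exterior square \<And>^2 V is modelled
  by its coordinates w.r.t. the basis e_r \<and> e_s (r < s): vectors in 'a^('n \<times> 'n) whose
  coordinates at pairs (r,s) with \<not> r < s vanish.\<close>

definition wedge2 :: "(('a::field) ^ (('n::{finite,linorder}) \<times> ('n::{finite,linorder}))) set" where
  "wedge2 = {w. \<forall>r s. \<not> r < s \<longrightarrow> w $ (r, s) = 0}"

definition wedge :: "('a::field) ^ ('n::{finite,linorder}) \<Rightarrow> ('a::field) ^ ('n::{finite,linorder}) \<Rightarrow> ('a::field) ^ (('n::{finite,linorder}) \<times> ('n::{finite,linorder}))" where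
  "wedge u v = (\<chi> p. if fst p < snd p
       then u $ fst p * v $ snd p - u $ snd p * v $ fst p else 0)"

definition decomposable :: "('a::field) ^ (('n::{finite,linorder}) \<times> ('n::{finite,linorder})) \<Rightarrow> bool" where
  "decomposable w \<longleftrightarrow> w \<noteq> 0 \<and> (\<exists>u v. w = wedge u v)"

definition sigma :: "('a::field) ^ (('n::{finite,linorder}) \<times> ('n::{finite,linorder})) \<Rightarrow> ('a::field) ^ ('n::{finite,linorder}) ^ ('n::{finite,linorder})" where
  "sigma w = (\<chi> i j. if i < j then w $ (i, j) else if j < i then - w $ (j, i) else 0)"

definition wrank :: "('a::field) ^ (('n::{finite,linorder}) \<times> ('n::{finite,linorder})) \<Rightarrow> nat" where
  "wrank w = rank (sigma w)"

end

theory Submission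
  imports Defs
begin

text \<open>Let a be the least index and a < b < c. Take W spanned by the e_a \<and> e_s (s > a) and
  e_b \<and> e_c. Every w \<in> W has the form e_a \<and> x + t (e_b \<and> e_c) with x_a = 0. If t = 0,
  or if x lies in span {e_b, e_c} (so that everything lives in the 3-dimensional \<And>^2 of
  span {e_a, e_b, e_c}), w is decomposable. Otherwise some x_s \<noteq> 0 with s \<notin> {a, b, c}, and
  the rows of \<sigma>(w) span {x, e_a, e_b, e_c}, which has dimension 4; since decomposable vectors
  have rank at most 2, these are exactly the non-decomposable ones. Counting the two
  decomposable coordinate subspaces by inclusion-exclusion gives the numbers.\<close>

definition coord_subspace :: "'i set \<Rightarrow> ('a::field ^ 'i::finite) set" where
  "coord_subspace S = {w. \<forall>p. p \<notin> S \<longrightarrow> w $ p = 0}"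

lemma subspace_coord_subspace: "vec.subspace (coord_subspace S)"
  by (auto simp: vec.subspace_def coord_subspace_def)

lemma coord_subspace_Int: "coord_subspace S \<inter> coord_subspace T = coord_subspace (S \<inter> T)"
  by (auto simp: coord_subspace_def)

lemma coord_subspace_mono: "S \<subseteq> T \<Longrightarrow> coord_subspace S \<subseteq> coord_subspace T"
  by (auto simp: coord_subspace_def)

lemma mem_coord_subspace_iff:
  "w \<in> coord_subspace S \<Longrightarrow> w \<in> coord_subspace T \<longleftrightarrow> (\<forall>p \<in> S - T. w $ p = 0)"
  by (auto simp: coord_subspace_def)

lemma card_coord_subspace:
  "card (coord_subspace S :: ('a::{finite,field} ^ 'i::finite) set) = CARD('a) ^ card S"
proof -
  have "bij_betw (\<lambda>w. restrict (($) w) S) (coord_subspace S) (PiE S (\<lambda>_. UNIV :: 'a set))"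
    by (rule bij_betw_byWitness[where f' = "\<lambda>h. \<chi> p. if p \<in> S then h p else 0"])
       (auto simp: coord_subspace_def vec_eq_iff PiE_def extensional_def)
  then show ?thesis
    by (simp add: bij_betw_same_card card_PiE)
qed

lemma span_axis_eq_coord_subspace:
  "vec.span ((\<lambda>p. axis p 1) ` S) = (coord_subspace S :: ('a::field ^ 'i::finite) set)"
  (is "?span = _")
proof
  show "?span \<subseteq> coord_subspace S"
    by (rule vec.span_minimal[OF _ subspace_coord_subspace]) (auto simp: coord_subspace_def axis_def)
  show "coord_subspace S \<subseteq> ?span"
  proof
    fix w :: "'a ^ 'i" assume w: "w \<in> coord_subspace S"
    have "w = (\<Sum>p\<in>S. w $ p *s axis p 1)"
      using w by (auto simp: vec_eq_iff axis_def coord_subspace_def if_distrib cong: if_cong)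
    also have "\<dots> \<in> ?span"
      by (intro vec.span_sum vec.span_scale vec.span_base) auto
    finally show "w \<in> ?span" .
  qed
qed

lemma dim_coord_subspace: "vec.dim (coord_subspace S :: ('a::field ^ 'i::finite) set) = card S"
proof -
  have "vec.independent ((\<lambda>p. axis p (1::'a)) ` S)"
    by (rule vec.independent_mono[OF independent_cart_basis]) (auto simp: cart_basis_def)
  then have "vec.dim (coord_subspace S :: ('a ^ 'i) set) = card ((\<lambda>p. axis p (1::'a)) ` S)"
    by (metis span_axis_eq_coord_subspace vec.dim_span_eq_card_independent)
  also have "\<dots> = card S"
    by (rule card_image) (auto simp: inj_on_def axis_eq_axis)
  finally show ?thesis .
qed

lemma sigma_wedge: "sigma (wedge u v) $ i $ j = u $ i * v $ j - u $ j * v $ i"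
  by (auto simp: sigma_def wedge_def algebra_simps)

lemma row_sigma_wedge: "row i (sigma (wedge u v)) = u $ i *s v - v $ i *s u"
  by (simp add: vec_eq_iff row_def sigma_wedge mult.commute)

lemma row_sigma_add: "row i (sigma (w + w')) = row i (sigma w) + row i (sigma w')"
  by (simp add: vec_eq_iff row_def sigma_def)

lemma row_sigma_scale: "row i (sigma (t *s w)) = t *s row i (sigma w)"
  by (simp add: vec_eq_iff row_def sigma_def)

lemma wrank_wedge_le: "wrank (wedge u v) \<le> 2"
proof -
  have "rows (sigma (wedge u v)) \<subseteq> vec.span {u, v}"
    unfolding rows_def row_sigma_wedge
    by (blast intro: vec.span_diff vec.span_scale vec.span_base)
  then have "wrank (wedge u v) \<le> card {u, v}"
    unfolding wrank_def row_rank_def_gen by (rule vec.dim_le_card) simp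
  also have "\<dots> \<le> 2"
    by (simp add: card_insert_le_m1)
  finally show ?thesis .
qed

lemma decomposable_imp_wrank_le: "decomposable w \<Longrightarrow> wrank w \<le> 2"
  using wrank_wedge_le by (auto simp: decomposable_def)

lemma independent_insert_axes:
  assumes "distinct [a, b, c, s]" and "x $ s \<noteq> 0"
  shows "vec.independent {x, axis a 1, axis b 1, axis c (1::'a::field)}"
proof (rule vec.independent_insertI)
  show "vec.independent {axis a 1, axis b 1, axis c (1::'a)}"
    by (rule vec.independent_mono[OF independent_cart_basis]) (auto simp: cart_basis_def)
  have "vec.span {axis a 1, axis b 1, axis c (1::'a)} \<subseteq> {y. y $ s = 0}"
    using assms(1) by (intro vec.span_minimal) (auto simp: vec.subspace_def axis_def)
  then show "x \<notin> vec.span {axis a 1, axis b 1, axis c 1}"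
    using assms(2) by auto
qed

lemma wrank_wedge_add_wedge_axes:
  fixes x :: "'a::field ^ 'n::{finite,linorder}"
  assumes abcs: "distinct [a, b, c, s]" and x: "x $ a = 0" "x $ s \<noteq> 0" and t: "t \<noteq> 0"
  shows "wrank (wedge (axis a 1) x + t *s wedge (axis b 1) (axis c 1)) = 4"
proof -
  define M where "M = sigma (wedge (axis a 1) x + t *s wedge (axis b 1) (axis c 1))"
  define T where "T = {x, axis a 1, axis b 1, axis c (1::'a)}"
  have row_M: "row i M = axis a 1 $ i *s x - x $ i *s axis a 1
      + t *s (axis b 1 $ i *s axis c 1 - axis c 1 $ i *s axis b 1)" for i
    by (simp add: M_def row_sigma_add row_sigma_scale row_sigma_wedge)
  have rows_T: "rows M \<subseteq> vec.span T"
    unfolding rows_def row_M T_def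
    by (blast intro: vec.span_add vec.span_diff vec.span_scale vec.span_base)
  have row_in: "row i M \<in> vec.span (rows M)" for i
    by (auto simp: rows_def intro: vec.span_base)
  have ea: "axis a 1 = (- 1 / x $ s) *s row s M"
    using abcs x by (auto simp: row_M vec_eq_iff axis_def)
  have ea_in: "axis a 1 \<in> vec.span (rows M)"
    unfolding ea by (intro vec.span_scale row_in)
  have "x = row a M"
    using abcs x by (auto simp: row_M vec_eq_iff axis_def)
  then have x_in: "x \<in> vec.span (rows M)"
    using row_in by simp
  have "axis c 1 = (1 / t) *s (row b M + x $ b *s axis a 1)"
    using abcs t by (auto simp: row_M vec_eq_iff axis_def)
  then have ec_in: "axis c 1 \<in> vec.span (rows M)"
    by (metis row_in ea_in vec.span_scale vec.span_add)
  have "axis b 1 = (- 1 / t) *s (row c M + x $ c *s axis a 1)"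
    using abcs t by (auto simp: row_M vec_eq_iff axis_def)
  then have eb_in: "axis b 1 \<in> vec.span (rows M)"
    by (metis row_in ea_in vec.span_scale vec.span_add)
  with x_in ea_in ec_in have "T \<subseteq> vec.span (rows M)"
    by (simp add: T_def)
  with rows_T have "vec.span (rows M) = vec.span T"
    using vec.span_eq by blast
  moreover have "x \<notin> {axis a 1, axis b 1, axis c 1}"
    using abcs x by (auto simp: axis_def vec_eq_iff)
  then have "card T = 4"
    using abcs by (simp add: T_def axis_eq_axis)
  moreover have "vec.independent T"
    unfolding T_def using independent_insert_axes[OF abcs x(2)] .
  ultimately show ?thesis
    unfolding wrank_def row_rank_def_gen M_def[symmetric]
    by (metis vec.dim_span vec.dim_span_eq_card_independent)
qed

definition star_pairs :: "'n::linorder \<Rightarrow> ('n \<times> 'n) set" where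
  "star_pairs a = Pair a ` {a<..}"

lemma coord_subspace_star_pairs_eq_wedge:
  "w \<in> coord_subspace (star_pairs a) \<Longrightarrow>
     w = wedge (axis a 1) (\<chi> s. if a < s then w $ (a, s) else 0)"
  by (auto simp: vec_eq_iff coord_subspace_def star_pairs_def wedge_def axis_def)

lemma decomposable_star_pairs:
  "w \<in> coord_subspace (star_pairs a) \<Longrightarrow> w \<noteq> 0 \<Longrightarrow> decomposable w"
  by (metis coord_subspace_star_pairs_eq_wedge decomposable_def)

lemma decomposable_triangle:
  assumes "a < b" "b < c" and w: "w \<in> coord_subspace {(a, b), (a, c), (b, c)}" "w \<noteq> 0"
  shows "decomposable w"
proof (cases "w $ (b, c) = 0")
  case True
  with assms have "w \<in> coord_subspace {(a, b), (a, c)}"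
    by (auto simp: mem_coord_subspace_iff[OF w(1)])
  moreover have "{(a, b), (a, c)} \<subseteq> star_pairs a"
    using assms(1,2) by (auto simp: star_pairs_def)
  ultimately have "w \<in> coord_subspace (star_pairs a)"
    using coord_subspace_mono by blast
  then show ?thesis
    using w(2) by (rule decomposable_star_pairs)
next
  case False
  with assms have "w = wedge (w $ (a, c) *s axis a 1 + w $ (b, c) *s axis b 1)
      ((- w $ (a, b) / w $ (b, c)) *s axis a 1 + axis c 1)"
    by (auto simp: vec_eq_iff coord_subspace_def wedge_def axis_def)
  with w(2) show ?thesis
    by (auto simp: decomposable_def)
qed

lemma star_edge_eq_wedge_add_wedge:
  assumes "a \<noteq> b" "b < c" "w \<in> coord_subspace (insert (b, c) (star_pairs a))"
  shows "w = wedge (axis a 1) (\<chi> s. if a < s then w $ (a, s) else 0)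
           + w $ (b, c) *s wedge (axis b 1) (axis c 1)"
  using assms by (auto simp: vec_eq_iff coord_subspace_def star_pairs_def wedge_def axis_def)

lemma wrank_star_edge:
  assumes "a < b" "b < c" and w: "w \<in> coord_subspace (insert (b, c) (star_pairs a))"
    and "w \<notin> coord_subspace (star_pairs a)" "w \<notin> coord_subspace {(a, b), (a, c), (b, c)}"
  shows "wrank w = 4"
proof -
  define x where "x = (\<chi> s. if a < s then w $ (a, s) else 0)"
  have t: "w $ (b, c) \<noteq> 0"
    using assms by (auto simp: mem_coord_subspace_iff[OF w])
  obtain s where s: "a < s" "s \<noteq> b" "s \<noteq> c" "w $ (a, s) \<noteq> 0"
    using assms by (auto simp: mem_coord_subspace_iff[OF w] star_pairs_def)
  have "distinct [a, b, c, s]"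
    using s assms(1,2) by auto
  moreover have "x $ a = 0" "x $ s \<noteq> 0"
    using s by (simp_all add: x_def)
  moreover have "w = wedge (axis a 1) x + w $ (b, c) *s wedge (axis b 1) (axis c 1)"
    unfolding x_def using assms(1,2) w by (intro star_edge_eq_wedge_add_wedge) auto
  ultimately show ?thesis
    using wrank_wedge_add_wedge_axes t by metis
qed

lemma decomposable_star_edge_iff:
  assumes "a < b" "b < c" and w: "w \<in> coord_subspace (insert (b, c) (star_pairs a))"
  shows "decomposable w \<longleftrightarrow>
    w \<noteq> 0 \<and> (w \<in> coord_subspace (star_pairs a) \<or> w \<in> coord_subspace {(a, b), (a, c), (b, c)})"
  using assms wrank_star_edge[OF assms] decomposable_imp_wrank_le
    decomposable_star_pairs decomposable_triangle
  by (fastforce simp: decomposable_def)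

lemma count_decomposable_arith:
  fixes q n d :: nat
  assumes q: "1 \<le> q" and d: "d + q\<^sup>2 + 1 = q ^ n + q ^ 3"
  shows "d = (q ^ n - 1) + q\<^sup>2 * (q - 1)"
proof -
  have "q ^ 3 = q\<^sup>2 * (q - 1) + q\<^sup>2"
    using q by (cases q) (simp_all add: power2_eq_square power3_eq_cube algebra_simps)
  moreover have "1 \<le> q ^ n"
    using q by simp
  ultimately show ?thesis
    using d by linarith
qed

lemma count_nondecomposable_arith:
  fixes q n d :: nat
  assumes q: "1 \<le> q" and n: "2 \<le> n" and d: "d + q\<^sup>2 + 1 = q ^ n + q ^ 3"
  shows "q ^ (n + 1) - (d + 1) = (q ^ n - q\<^sup>2) * (q - 1)"
proof -
  have "q\<^sup>2 \<le> q ^ n"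
    using q n by (simp add: power_increasing)
  then obtain r where r: "q ^ n = q\<^sup>2 + r"
    using le_Suc_ex by blast
  have "q ^ (n + 1) = q ^ 3 + q * r"
    by (simp add: r algebra_simps power2_eq_square power3_eq_cube)
  moreover have "(q ^ n - q\<^sup>2) * (q - 1) = q * r - r"
    by (simp add: r right_diff_distrib' mult.commute)
  moreover have "r \<le> q * r"
    using q by simp
  ultimately show ?thesis
    using r d by linarith
qed

lemma card_decomposable_star_edge:
  fixes a b c :: "'n::{finite,linorder}"
  assumes "a < b" "b < c"
  defines "W \<equiv> coord_subspace (insert (b, c) (star_pairs a)) :: ('a::{finite,field} ^ ('n \<times> 'n)) set"
    and "q \<equiv> CARD('a)" and "n \<equiv> card (star_pairs a)"
  shows "card {w \<in> W. decomposable w} = (q ^ n - 1) + q\<^sup>2 * (q - 1)"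
    and "card {w \<in> W. w \<noteq> 0 \<and> \<not> decomposable w} = (q ^ n - q\<^sup>2) * (q - 1)"
proof -
  define S3 where "S3 = {(a, b), (a, c), (b, c)}"
  let ?Z = "coord_subspace :: _ \<Rightarrow> ('a ^ ('n \<times> 'n)) set"
  have bc_notin: "(b, c) \<notin> star_pairs a"
    using assms(1) by (auto simp: star_pairs_def)
  have S0_S3: "star_pairs a \<inter> S3 = {(a, b), (a, c)}"
    using assms(1,2) by (auto simp: star_pairs_def S3_def)
  have card_S3: "card S3 = 3"
    using order.strict_trans[OF assms(1,2)] assms(1,2) by (auto simp: S3_def card_insert_if)
  have "{(a, b), (a, c)} \<subseteq> star_pairs a"
    using S0_S3 by blast
  then have n: "2 \<le> n"
    unfolding n_def using assms(1,2) card_mono[of "star_pairs a" "{(a, b), (a, c)}"] by simp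
  have q: "1 \<le> q"
    unfolding q_def by (simp add: Suc_leI)
  have "?Z (star_pairs a) \<subseteq> W" "?Z S3 \<subseteq> W"
    using S0_S3 unfolding W_def by (auto intro!: coord_subspace_mono simp: S3_def)
  then have decomposables: "{w \<in> W. decomposable w} = (?Z (star_pairs a) \<union> ?Z S3) - {0}"
    using decomposable_star_edge_iff[OF assms(1,2)] unfolding W_def S3_def by blast
  have "card (?Z (star_pairs a) \<union> ?Z S3) + q\<^sup>2 = q ^ n + q ^ 3"
    using card_Un_Int[of "?Z (star_pairs a)" "?Z S3"] assms(1,2)
    by (simp add: coord_subspace_Int S0_S3 card_coord_subspace q_def n_def card_S3 power2_eq_square)
  moreover have "Suc (card {w \<in> W. decomposable w}) = card (?Z (star_pairs a) \<union> ?Z S3)"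
    unfolding decomposables by (rule card_Suc_Diff1) (simp_all add: coord_subspace_def)
  ultimately have card_D: "card {w \<in> W. decomposable w} + q\<^sup>2 + 1 = q ^ n + q ^ 3"
    by simp
  with q show "card {w \<in> W. decomposable w} = (q ^ n - 1) + q\<^sup>2 * (q - 1)"
    by (rule count_decomposable_arith)
  have zero: "0 \<in> W" "0 \<notin> {w \<in> W. decomposable w}"
    by (auto simp: W_def coord_subspace_def decomposable_def)
  have "{w \<in> W. w \<noteq> 0 \<and> \<not> decomposable w} = W - insert 0 {w \<in> W. decomposable w}"
    by auto
  then have "card {w \<in> W. w \<noteq> 0 \<and> \<not> decomposable w} = card W - (card {w \<in> W. decomposable w} + 1)"
    using zero by (simp add: card_Diff_subset)
  also have "card W = q ^ (n + 1)"
    using bc_notin by (simp add: W_def card_coord_subspace q_def n_def)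
  finally show "card {w \<in> W. w \<noteq> 0 \<and> \<not> decomposable w} = (q ^ n - q\<^sup>2) * (q - 1)"
    using count_nondecomposable_arith[OF q n card_D] by simp
qed

lemma obtain_least_and_two_greater:
  assumes "CARD('n::{finite,linorder}) \<ge> 3"
  obtains a b c :: "'n::{finite,linorder}" where "\<forall>s. a \<le> s" "a < b" "b < c"
proof -
  have nonempty: "UNIV - A \<noteq> {}" if "card A < CARD('n)" for A :: "'n set"
    using that card_mono[of A UNIV] by auto
  define a :: 'n where "a = Min UNIV"
  define b where "b = Min (UNIV - {a})"
  define c where "c = Min (UNIV - {a, b})"
  have "b \<in> UNIV - {a}"
    unfolding b_def using assms by (intro Min_in nonempty) auto
  moreover have "c \<in> UNIV - {a, b}"
    unfolding c_def using assms
    by (intro Min_in nonempty) (auto simp: card_insert_if)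
  moreover have "b \<le> c"
    using calculation unfolding b_def by (intro Min_le) auto
  moreover have "a \<le> s" for s
    unfolding a_def by simp
  ultimately show thesis
    by (intro that[of a b c]) (auto simp: order.strict_iff_order)
qed

theorem lemma6p5:
  fixes q m \<mu> :: nat
  assumes "q = CARD('a::{finite,field})"
    and "m = CARD('n::{finite,linorder})"
    and "m > 4"
    and "\<mu> = m - 1"
  shows "\<exists>W :: ('a ^ ('n \<times> 'n)) set.
           W \<subseteq> wedge2 \<and> vec.subspace W \<and> vec.dim W = \<mu> + 1 \<and>
           card {w \<in> W. decomposable w} = (q ^ \<mu> - 1) + q\<^sup>2 * (q - 1) \<and>
           card {w \<in> W. w \<noteq> 0 \<and> \<not> decomposable w} = (q ^ \<mu> - q\<^sup>2) * (q - 1) \<and>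
           (\<forall>w \<in> W. w \<noteq> 0 \<and> \<not> decomposable w \<longrightarrow> wrank w = 4)"
proof -
  obtain a b c :: 'n where least: "\<forall>s. a \<le> s" and abc: "a < b" "b < c"
    using obtain_least_and_two_greater[where 'n='n] assms(2,3) by auto
  have "star_pairs a = Pair a ` (UNIV - {a})"
    using least by (auto simp: star_pairs_def order.strict_iff_order)
  then have card_star: "card (star_pairs a) = \<mu>"
    using assms(2,4) by (simp add: card_image inj_on_def)
  define W :: "('a ^ ('n \<times> 'n)) set" where "W = coord_subspace (insert (b, c) (star_pairs a))"
  have "(b, c) \<notin> star_pairs a"
    using abc by (auto simp: star_pairs_def)
  then have "vec.dim W = \<mu> + 1"
    by (simp add: W_def dim_coord_subspace card_star)
  moreover have "W \<subseteq> wedge2"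
    using abc by (auto simp: W_def wedge2_def coord_subspace_def star_pairs_def)
  moreover have "\<forall>w \<in> W. w \<noteq> 0 \<and> \<not> decomposable w \<longrightarrow> wrank w = 4"
    using decomposable_star_edge_iff[OF abc] wrank_star_edge[OF abc] by (auto simp: W_def)
  ultimately show ?thesis
    using card_decomposable_star_edge[OF abc, where 'a='a] assms(1)
    by (intro exI[of _ W]) (simp add: W_def card_star subspace_coord_subspace)
qed

end
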